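(* Let $\phi=\frac{1+\sqrt5}{2}$ and let $\Gamma\subset SL_2(\mathbb R)$ be the group generated by $$\sigma_0=\begin{pmatrix}1&\phi\\0&1\end{pmatrix},\quad \sigma_1=\begin{pmatrix}\phi&\phi\\1&\phi\end{pmatrix},\quad \sigma_2=\begin{pmatrix}\phi&1\\\phi&\phi\end{pmatrix},\quad \sigma_3=\begin{pmatrix}1&0\\\phi&1\end{pmatrix}.$$ Let $S=\{\gamma\binom{1}{0}:\gamma\in\Gamma\}\subset\mathbb R^2$. There exist a sequence of positive numbers $\epsilon_n\to 0$ and a constant $C>0$ such that for every $n$ there are three distinct points of $S$ lying on a horizontal line segment of length $\epsilon_n$, and these three points lie in the ball centered at the origin of radius $C\epsilon_n^{-4}$.
   Context: A horizontal line segment is a segment contained in a line $\{y=c\}$ in $\mathbb R^2$. Balls are with respect to the Euclidean norm. $\Gamma$ acts on $\mathbb R^2$ by matrix multiplication on column vectors. *)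

theory Defs
  imports "HOL-Analysis.Analysis"
begin

definition phi :: real where "phi = (1 + sqrt 5) / 2"

definition sigma0 :: "real^2^2" where "sigma0 = vector [vector [1, phi], vector [0, 1]]"
definition sigma1 :: "real^2^2" where "sigma1 = vector [vector [phi, phi], vector [1, phi]]"
definition sigma2 :: "real^2^2" where "sigma2 = vector [vector [phi, 1], vector [phi, phi]]"
definition sigma3 :: "real^2^2" where "sigma3 = vector [vector [1, 0], vector [phi, 1]]"

definition generators :: "(real^2^2) set" where
  "generators = {sigma0, sigma1, sigma2, sigma3}"

inductive_set Gamma :: "(real^2^2) set" where
  one: "mat 1 \<in> Gamma"
| mult: "g \<in> Gamma \<Longrightarrow> s \<in> generators \<Longrightarrow> g ** s \<in> Gamma"
| mult_inv: "g \<in> Gamma \<Longrightarrow> s \<in> generators \<Longrightarrow> g ** matrix_inv s \<in> Gamma"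

definition orbitS :: "(real^2) set" where
  "orbitS = {\<gamma> *v vector [1, 0] | \<gamma>. \<gamma> \<in> Gamma}"

end

theory Submission
  imports Defs "HOL-Number_Theory.Fib"
begin

text \<open>
  Besides the shears \<open>T(k\<phi>) = [[1,k\<phi>],[0,1]]\<close> and \<open>L(k\<phi>) = [[1,0],[k\<phi>,1]]\<close>, \<open>\<Gamma>\<close> contains the
  quarter turn \<open>J = T(-\<phi>) \<sigma>\<^sub>1 T(-\<phi>)\<close>. Put \<open>\<psi> = 1 - \<phi> = -1/\<phi>\<close>. The Fibonacci identity
  \<open>F(m+1) = \<phi> F(m) + \<psi>^m\<close> shows that the three orbit points \<open>a = (1, (1 - F(2n+3)) \<phi>)\<close>,
  \<open>(\<phi>, \<phi> - F(2n+2) (\<phi>+1))\<close> and \<open>(1+2\<phi>, \<phi> - F(2n) (3\<phi>+2))\<close>, images of \<open>(1,0)\<close> under short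
  words, are \<open>a\<close>, \<open>a + (\<phi>-1) v\<close> and \<open>a + 2\<phi> v\<close> with \<open>v = (1, \<psi>^(2n))\<close>. A word \<open>R\<^sub>n\<close> in \<open>J\<close>, \<open>J\<^sup>-\<^sup>1\<close>
  and the shears \<open>T(L(2i+1) \<phi>)\<close> by Lucas multiples of \<open>\<phi>\<close> sends \<open>\<phi>^(n\<^sup>2+n+1) v\<close> to \<open>(1,0)\<close>, one letter
  per step \<open>i+1 \<rightarrow> i\<close> because \<open>L(2i+1) \<phi> = \<phi>^(2i+2) - \<psi>^(2i)\<close>. So \<open>R\<^sub>n\<close> maps the three points to
  orbit points on a horizontal segment of length \<open>\<epsilon>\<^sub>n = 2 \<phi>^-(n\<^sup>2+n)\<close>. Each letter has norm at most
  \<open>\<phi>^(2i+5)\<close>, so the three images have norm \<open>O(\<phi>^(n\<^sup>2+6n))\<close>, far below \<open>\<epsilon>\<^sub>n^-4 = \<phi>^(4n\<^sup>2+4n)/16\<close>.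
\<close>

definition mat2 :: "real \<Rightarrow> real \<Rightarrow> real \<Rightarrow> real \<Rightarrow> real^2^2" where
  "mat2 a b c d = vector [vector [a, b], vector [c, d]]"

lemma mat2_mult:
  "mat2 a b c d ** mat2 a' b' c' d' = mat2 (a*a' + b*c') (a*b' + b*d') (c*a' + d*c') (c*b' + d*d')"
  by (simp add: mat2_def vec_eq_iff forall_2 matrix_matrix_mult_def sum_2)

lemma mat2_mulv: "mat2 a b c d *v vector [x, y] = vector [a*x + b*y, c*x + d*y]"
  by (simp add: mat2_def vec_eq_iff forall_2 matrix_vector_mult_def sum_2)

lemma mat_1_eq_mat2: "mat 1 = mat2 1 0 0 1"
  by (simp add: mat2_def vec_eq_iff forall_2 mat_def)

lemma norm_mat2_mulv_le:
  "norm (mat2 a b c d *v x) \<le> (\<bar>a\<bar> + \<bar>b\<bar> + \<bar>c\<bar> + \<bar>d\<bar>) * norm x"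
proof -
  have "norm (mat2 a b c d *v x) \<le> onorm ((*v) (mat2 a b c d)) * norm x"
    by (rule onorm[OF matrix_vector_mul_bounded_linear])
  also have "\<dots> \<le> (\<bar>a\<bar> + \<bar>b\<bar> + \<bar>c\<bar> + \<bar>d\<bar>) * norm x"
    using onorm_le_matrix_component_sum[of "mat2 a b c d"]
    by (intro mult_right_mono) (simp_all add: mat2_def sum_2)
  finally show ?thesis .
qed

lemma norm_vector2_le: "norm (vector [x, y] :: real^2) \<le> \<bar>x\<bar> + \<bar>y\<bar>"
  using norm_le_l1_cart[of "vector [x, y] :: real^2"] by (simp add: sum_2)

lemma matrix_inv_eqI:
  fixes A B :: "'a::semiring_1^'n^'n"
  assumes "A ** B = mat 1" "B ** A = mat 1"
  shows "matrix_inv A = B"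
proof -
  have inv: "A ** matrix_inv A = mat 1 \<and> matrix_inv A ** A = mat 1"
    unfolding matrix_inv_def by (rule someI[of _ B]) (simp add: assms)
  have "matrix_inv A = matrix_inv A ** (A ** B)"
    by (simp add: assms)
  also have "\<dots> = B"
    using inv by (simp add: matrix_mul_assoc)
  finally show ?thesis .
qed

lemma three_points_on_segment:
  fixes p v :: "'a::real_vector"
  assumes "v \<noteq> 0" "0 < a" "a < b"
  shows "p \<noteq> p + a *\<^sub>R v" "p \<noteq> p + b *\<^sub>R v" "p + a *\<^sub>R v \<noteq> p + b *\<^sub>R v"
    and "{p, p + a *\<^sub>R v, p + b *\<^sub>R v} \<subseteq> closed_segment p (p + b *\<^sub>R v)"
proof -
  show "p \<noteq> p + a *\<^sub>R v" "p \<noteq> p + b *\<^sub>R v" "p + a *\<^sub>R v \<noteq> p + b *\<^sub>R v"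
    using assms by auto
  have "p + a *\<^sub>R v = (1 - a / b) *\<^sub>R p + (a / b) *\<^sub>R (p + b *\<^sub>R v)"
    using assms by (simp add: algebra_simps)
  then have "p + a *\<^sub>R v \<in> closed_segment p (p + b *\<^sub>R v)"
    using assms unfolding in_segment by (intro conjI exI[of _ "a / b"]) auto
  then show "{p, p + a *\<^sub>R v, p + b *\<^sub>R v} \<subseteq> closed_segment p (p + b *\<^sub>R v)"
    by simp
qed

lemma phi_square: "phi * phi = phi + 1"
  by (simp add: phi_def field_simps)

lemma phi_gt_1: "phi > 1"
  by (simp add: phi_def)

definition psi :: real where "psi = 1 - phi"

lemma psi_square: "psi * psi = psi + 1"
  using phi_square by (simp add: psi_def algebra_simps)

lemma phi_times_psi: "phi * psi = -1"
  using phi_square by (simp add: psi_def algebra_simps)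

lemma psi_neg: "psi < 0"
  using phi_gt_1 by (simp add: psi_def)

lemma fib_Suc_eq_root:
  fixes r :: real
  assumes "r * r = r + 1"
  shows "real (fib (Suc n)) = r * real (fib n) + (1 - r) ^ n"
proof (induction n rule: fib.induct)
  case (3 n)
  have "(1 - r) * (1 - r) = 1 + (1 - r)"
    using assms by (simp add: algebra_simps)
  then have "(1 - r) ^ Suc (Suc n) = (1 - r) ^ n + (1 - r) ^ Suc n"
    by (simp add: algebra_simps flip: mult.assoc)
  with 3 show ?case
    by (simp add: algebra_simps)
qed simp_all

lemma fib_Suc_phi: "real (fib (Suc n)) = phi * real (fib n) + psi ^ n"
  using fib_Suc_eq_root[OF phi_square] by (simp add: psi_def)

lemma fib_Suc_psi: "real (fib (Suc n)) = psi * real (fib n) + phi ^ n"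
  using fib_Suc_eq_root[OF psi_square] by (simp add: psi_def)

lemma lucas_closed_form: "real (fib n + fib (n + 2)) = phi ^ (n + 1) + psi ^ (n + 1)"
  using fib_Suc_phi[of "Suc n"] fib_Suc_psi[of "Suc n"] fib_Suc_phi[of n]
  by (simp add: psi_def algebra_simps)

lemma fib_Suc_le_phi_power: "real (fib (Suc n)) \<le> phi ^ n"
  using fib_Suc_psi[of n] psi_neg by (simp add: mult_nonpos_nonneg)

lemma Gamma_mult_closed:
  assumes "g \<in> Gamma" "h \<in> Gamma"
  shows "g ** h \<in> Gamma"
  using assms(2,1)
proof (induction h rule: Gamma.induct)
  case one
  then show ?case
    by simp
next
  case (mult h s)
  then show ?case
    by (metis Gamma.mult matrix_mul_assoc)
next
  case (mult_inv h s)
  then show ?case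
    by (metis Gamma.mult_inv matrix_mul_assoc)
qed

lemma generator_in_Gamma: "s \<in> generators \<Longrightarrow> s \<in> Gamma"
  by (metis Gamma.mult Gamma.one matrix_mul_lid)

lemma Gamma_mulv_in_orbitS: "g \<in> Gamma \<Longrightarrow> x \<in> orbitS \<Longrightarrow> g *v x \<in> orbitS"
  unfolding orbitS_def by (auto simp: matrix_vector_mul_assoc intro: Gamma_mult_closed)

lemma Gamma_mulv_basis_in_orbitS: "g \<in> Gamma \<Longrightarrow> g *v vector [1, 0] \<in> orbitS"
  unfolding orbitS_def by blast

lemma one_parameter_subgroup_in_Gamma:
  assumes add: "\<And>a b. F a ** F b = F (a + b)" and zero: "F 0 = mat 1"
    and gen: "F c \<in> generators"
  shows "F (of_int k * c) \<in> Gamma"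
proof (induction k rule: int_induct[where k = 0])
  case base
  then show ?case
    by (simp add: zero Gamma.one)
next
  case (step1 k)
  then show ?case
    using Gamma.mult[OF step1(2) gen] by (simp add: add distrib_right)
next
  case (step2 k)
  have "matrix_inv (F c) = F (- c)"
    by (rule matrix_inv_eqI) (simp_all add: add zero)
  then show ?case
    using Gamma.mult_inv[OF step2(2) gen] by (simp add: add left_diff_distrib)
qed

definition upper_shear :: "real \<Rightarrow> real^2^2" where "upper_shear t = mat2 1 t 0 1"
definition lower_shear :: "real \<Rightarrow> real^2^2" where "lower_shear t = mat2 1 0 t 1"
definition quarter_turn :: "real \<Rightarrow> real^2^2" where "quarter_turn s = mat2 0 s (- s) 0"

lemma upper_shear_in_Gamma: "upper_shear (of_int k * phi) \<in> Gamma"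
  by (rule one_parameter_subgroup_in_Gamma)
    (simp_all add: upper_shear_def mat2_mult add.commute mat_1_eq_mat2 generators_def sigma0_def
      mat2_def[symmetric])

lemma lower_shear_in_Gamma: "lower_shear (of_int k * phi) \<in> Gamma"
  by (rule one_parameter_subgroup_in_Gamma)
    (simp_all add: lower_shear_def mat2_mult add.commute mat_1_eq_mat2 generators_def sigma3_def
      mat2_def[symmetric])

lemma upper_shear_signed_in_Gamma:
  assumes "\<bar>s\<bar> = 1"
  shows "upper_shear (s * real m * phi) \<in> Gamma"
  using assms upper_shear_in_Gamma[of "- int m"] upper_shear_in_Gamma[of "int m"]
  by (cases "s \<ge> 0") auto

lemma quarter_turn_in_Gamma:
  assumes "\<bar>s\<bar> = 1"
  shows "quarter_turn s \<in> Gamma"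
proof -
  have "quarter_turn (-1) = upper_shear (-phi) ** sigma1 ** upper_shear (-phi)"
    by (simp add: quarter_turn_def upper_shear_def sigma1_def mat2_def[symmetric] mat2_mult
        algebra_simps phi_square)
  then have minus: "quarter_turn (-1) \<in> Gamma"
    using upper_shear_in_Gamma[of "-1"] generator_in_Gamma[of sigma1]
    by (simp add: Gamma_mult_closed generators_def)
  have "quarter_turn 1 = quarter_turn (-1) ** quarter_turn (-1) ** quarter_turn (-1)"
    by (simp add: quarter_turn_def mat2_mult)
  then have "quarter_turn 1 \<in> Gamma"
    using minus by (simp add: Gamma_mult_closed)
  with minus assms show ?thesis
    by (cases "s \<ge> 0") auto
qed

lemma orbitS_vector_1: "vector [1, of_int k * phi] \<in> orbitS"
  using Gamma_mulv_basis_in_orbitS[OF lower_shear_in_Gamma[of k]]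
  by (simp add: lower_shear_def mat2_mulv)

lemma orbitS_vector_phi: "vector [phi, phi - of_int k * (phi + 1)] \<in> orbitS"
proof -
  let ?g = "quarter_turn 1 ** upper_shear (of_int (k - 1) * phi) ** lower_shear (of_int 1 * phi)"
  have "?g \<in> Gamma"
    by (intro Gamma_mult_closed quarter_turn_in_Gamma upper_shear_in_Gamma lower_shear_in_Gamma) simp
  moreover have "?g *v vector [1, 0] = vector [phi, phi - of_int k * (phi + 1)]"
    using phi_square
    by (simp add: quarter_turn_def upper_shear_def lower_shear_def mat2_mult mat2_mulv
        vec_eq_iff forall_2) algebra
  ultimately show ?thesis
    by (metis Gamma_mulv_basis_in_orbitS)
qed

lemma orbitS_vector_1_plus_2_phi:
  "vector [1 + 2 * phi, phi - of_int k * (3 * phi + 2)] \<in> orbitS"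
proof -
  let ?g = "quarter_turn (-1) ** upper_shear (of_int k * phi) ** quarter_turn 1 **
    upper_shear (of_int 2 * phi) ** quarter_turn (-1) ** upper_shear (of_int 1 * phi) ** quarter_turn (-1)"
  have "?g \<in> Gamma"
    by (intro Gamma_mult_closed quarter_turn_in_Gamma upper_shear_in_Gamma) simp_all
  moreover have "?g *v vector [1, 0] = vector [1 + 2 * phi, phi - of_int k * (3 * phi + 2)]"
    using phi_square
    by (simp add: quarter_turn_def upper_shear_def mat2_mult mat2_mulv vec_eq_iff forall_2) algebra
  ultimately show ?thesis
    by (metis Gamma_mulv_basis_in_orbitS)
qed

definition base_point :: "nat \<Rightarrow> real^2" where
  "base_point n = vector [1, (1 - real (fib (2 * n + 3))) * phi]"

lemma base_point_in_orbitS: "base_point n \<in> orbitS"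
  using orbitS_vector_1[of "1 - int (fib (2 * n + 3))"] by (simp add: base_point_def)

definition slope :: "nat \<Rightarrow> real" where "slope i = psi ^ (2 * i)"
definition dilation :: "nat \<Rightarrow> real" where "dilation i = phi ^ (i * i + i + 1)"

lemma base_point_slope_shifts:
  shows "vector [phi, phi - real (fib (2 * n + 2)) * (phi + 1)] =
      base_point n + (phi - 1) *\<^sub>R vector [1, slope n]"
    and "vector [1 + 2 * phi, phi - real (fib (2 * n)) * (3 * phi + 2)] =
      base_point n + (2 * phi) *\<^sub>R vector [1, slope n]"
proof -
  have fib3: "real (fib (2 * n + 3)) = phi * real (fib (2 * n + 2)) + psi * psi * slope n"
    using fib_Suc_phi[of "2 * n + 2"]
    by (simp add: slope_def power_add mult.commute numeral_3_eq_3 del: fib.simps)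
  have fib2: "real (fib (2 * n + 2)) = phi * real (fib (2 * n + 1)) + psi * slope n"
    using fib_Suc_phi[of "2 * n + 1"] by (simp add: slope_def mult.commute del: fib.simps)
  have fib1: "real (fib (2 * n + 1)) = phi * real (fib (2 * n)) + slope n"
    using fib_Suc_phi[of "2 * n"] by (simp add: slope_def del: fib.simps)
  show "vector [phi, phi - real (fib (2 * n + 2)) * (phi + 1)] =
      base_point n + (phi - 1) *\<^sub>R vector [1, slope n]"
    using fib3 phi_square phi_times_psi
    by (simp add: base_point_def vec_eq_iff forall_2) algebra
  show "vector [1 + 2 * phi, phi - real (fib (2 * n)) * (3 * phi + 2)] =
      base_point n + (2 * phi) *\<^sub>R vector [1, slope n]"
    using fib3 fib2 fib1 phi_square phi_times_psi psi_square
    by (simp add: base_point_def vec_eq_iff forall_2) algebra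
qed

fun reduce_word :: "nat \<Rightarrow> real \<Rightarrow> real^2^2" where
  "reduce_word 0 s =
     quarter_turn s ** upper_shear (- s * phi) ** quarter_turn s ** upper_shear (- s * phi)"
| "reduce_word (Suc i) s =
     reduce_word i (- s) ** quarter_turn s **
       upper_shear (- s * real (fib (2 * i) + fib (2 * i + 2)) * phi)"

lemma reduce_word_in_Gamma: "\<bar>s\<bar> = 1 \<Longrightarrow> reduce_word i s \<in> Gamma"
proof (induction i arbitrary: s)
  case 0
  then show ?case
    using upper_shear_signed_in_Gamma[of "- s" 1]
    by (simp add: Gamma_mult_closed quarter_turn_in_Gamma)
next
  case (Suc i)
  then show ?case
    by (simp only: reduce_word.simps)
      (intro Gamma_mult_closed quarter_turn_in_Gamma upper_shear_signed_in_Gamma Suc.IH; simp)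
qed

lemma reduce_word_step:
  assumes "\<bar>s\<bar> = 1"
  shows "quarter_turn s ** upper_shear (- s * real (fib (2 * i) + fib (2 * i + 2)) * phi)
      *v vector [dilation (Suc i), s * dilation (Suc i) * slope (Suc i)]
    = vector [dilation i, - s * dilation i * slope i]"
proof -
  define P where "P = phi ^ (2 * i)"
  have ss: "s * s = 1"
    using assms by (metis abs_mult_self_eq mult.right_neutral)
  have PQ: "P * slope i = 1"
    using phi_times_psi by (simp add: P_def slope_def flip: power_mult_distrib)
  have lucas: "real (fib (2 * i) + fib (2 * i + 2)) = phi * P + psi * slope i"
    using lucas_closed_form[of "2 * i"] by (simp add: P_def slope_def)
  have "Suc i * Suc i + Suc i + 1 = (i * i + i + 1) + 2 + 2 * i"
    by simp
  then have "dilation (Suc i) = dilation i * (phi * phi) * P"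
    unfolding dilation_def P_def by (simp only: power_add power2_eq_square)
  moreover have "slope (Suc i) = slope i * (psi * psi)"
    by (simp add: slope_def)
  ultimately show ?thesis
    using ss PQ lucas phi_times_psi
    by (simp add: quarter_turn_def upper_shear_def mat2_mult mat2_mulv vec_eq_iff forall_2) algebra
qed

lemma reduce_word_mulv_eq_basis:
  "\<bar>s\<bar> = 1 \<Longrightarrow> reduce_word i s *v vector [dilation i, s * dilation i * slope i] = vector [1, 0]"
proof (induction i arbitrary: s)
  case 0
  then have "s * s = 1"
    by (metis abs_mult_self_eq mult.right_neutral)
  then show ?case
    using phi_square
    by (simp add: quarter_turn_def upper_shear_def dilation_def slope_def mat2_mult mat2_mulv
        vec_eq_iff forall_2) algebra
next
  case (Suc i)
  then have "\<bar>- s\<bar> = 1"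
    by simp
  then show ?case
    using Suc.IH reduce_word_step[OF Suc.prems, of i]
    by (simp only: reduce_word.simps flip: matrix_vector_mul_assoc)
qed

lemma dilation_pos: "dilation i > 0"
  using phi_gt_1 by (simp add: dilation_def)

lemma reduce_word_mulv_add_slope:
  "reduce_word i 1 *v (x + t *\<^sub>R vector [1, slope i]) =
    reduce_word i 1 *v x + (t / dilation i) *\<^sub>R vector [1, 0]"
proof -
  have "vector [1, slope i] =
      (1 / dilation i) *\<^sub>R (vector [dilation i, 1 * dilation i * slope i] :: real^2)"
    using dilation_pos[of i] by (simp add: vec_eq_iff forall_2)
  then have "reduce_word i 1 *v vector [1, slope i] = (1 / dilation i) *\<^sub>R vector [1, 0]"
    using reduce_word_mulv_eq_basis[of 1 i] by (simp add: matrix_vector_mult_scaleR)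
  then show ?thesis
    by (simp add: matrix_vector_right_distrib matrix_vector_mult_scaleR)
qed

lemma orbit_triple_in_orbitS:
  shows "reduce_word n 1 *v base_point n \<in> orbitS"
    and "reduce_word n 1 *v base_point n + ((phi - 1) / dilation n) *\<^sub>R vector [1, 0] \<in> orbitS"
    and "reduce_word n 1 *v base_point n + (2 * phi / dilation n) *\<^sub>R vector [1, 0] \<in> orbitS"
proof -
  have R: "reduce_word n 1 \<in> Gamma"
    by (rule reduce_word_in_Gamma) simp
  then show "reduce_word n 1 *v base_point n \<in> orbitS"
    by (rule Gamma_mulv_in_orbitS[OF _ base_point_in_orbitS])
  have "reduce_word n 1 *v base_point n + ((phi - 1) / dilation n) *\<^sub>R vector [1, 0] =
      reduce_word n 1 *v vector [phi, phi - real (fib (2 * n + 2)) * (phi + 1)]"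
    unfolding base_point_slope_shifts(1) reduce_word_mulv_add_slope ..
  then show "reduce_word n 1 *v base_point n + ((phi - 1) / dilation n) *\<^sub>R vector [1, 0] \<in> orbitS"
    using Gamma_mulv_in_orbitS[OF R orbitS_vector_phi[of "int (fib (2 * n + 2))"]] by simp
  have "reduce_word n 1 *v base_point n + (2 * phi / dilation n) *\<^sub>R vector [1, 0] =
      reduce_word n 1 *v vector [1 + 2 * phi, phi - real (fib (2 * n)) * (3 * phi + 2)]"
    unfolding base_point_slope_shifts(2) reduce_word_mulv_add_slope ..
  then show "reduce_word n 1 *v base_point n + (2 * phi / dilation n) *\<^sub>R vector [1, 0] \<in> orbitS"
    using Gamma_mulv_in_orbitS[OF R orbitS_vector_1_plus_2_phi[of "int (fib (2 * n))"]] by simp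
qed

lemma norm_turn_shear_mulv:
  assumes "\<bar>s\<bar> = 1"
  shows "norm ((quarter_turn s ** upper_shear t) *v x) \<le> 2 * (2 + \<bar>t\<bar>) * norm x"
proof -
  have "norm (quarter_turn s *v (upper_shear t *v x)) \<le> 2 * norm (upper_shear t *v x)"
    using norm_mat2_mulv_le[of 0 s "- s" 0] assms by (simp add: quarter_turn_def)
  also have "\<dots> \<le> 2 * ((2 + \<bar>t\<bar>) * norm x)"
    using norm_mat2_mulv_le[of 1 t 0 1] by (simp add: upper_shear_def)
  finally show ?thesis
    by (simp add: matrix_vector_mul_assoc algebra_simps)
qed

lemma turn_shear_factor_le:
  "2 * (2 + real (fib (2 * i) + fib (2 * i + 2)) * phi) \<le> phi ^ (2 * i + 5)"
proof -
  define X where "X = phi ^ (2 * i + 2)"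
  have "psi ^ (2 * i + 1) < 0"
    using psi_neg by (simp only: power_less_zero_eq) simp
  then have "real (fib (2 * i) + fib (2 * i + 2)) * phi \<le> X"
    using lucas_closed_form[of "2 * i"] phi_gt_1 by (simp add: X_def mult_right_mono)
  moreover have "2 \<le> X"
  proof -
    have "phi ^ 2 \<le> X"
      unfolding X_def using phi_gt_1 by (intro power_increasing) auto
    then show ?thesis
      using phi_gt_1 phi_square by (simp add: power2_eq_square)
  qed
  ultimately have "2 * (2 + real (fib (2 * i) + fib (2 * i + 2)) * phi) \<le> 4 * X"
    by (smt (verit))
  also have "\<dots> \<le> phi ^ 3 * X"
  proof (rule mult_right_mono)
    have "3 / 2 \<le> phi"
      unfolding phi_def using real_le_rsqrt[of 2 5] by simp
    then show "4 \<le> phi ^ 3"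
      using phi_square by (simp add: power3_eq_cube algebra_simps)
  qed (use \<open>2 \<le> X\<close> in simp)
  also have "\<dots> = phi ^ (2 * i + 5)"
    unfolding X_def power_add[symmetric] by (simp add: add.commute)
  finally show ?thesis .
qed

lemma norm_turn_shear_lucas_mulv:
  assumes "\<bar>s\<bar> = 1"
  shows "norm ((quarter_turn s ** upper_shear (- s * real (fib (2 * i) + fib (2 * i + 2)) * phi))
    *v x) \<le> phi ^ (2 * i + 5) * norm x"
proof -
  let ?L = "real (fib (2 * i) + fib (2 * i + 2))"
  have "\<bar>- s * ?L * phi\<bar> = ?L * phi"
    using assms phi_gt_1 by (simp add: abs_mult)
  then have "norm ((quarter_turn s ** upper_shear (- s * ?L * phi)) *v x) \<le>
      2 * (2 + ?L * phi) * norm x"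
    using norm_turn_shear_mulv[OF assms] by metis
  also have "\<dots> \<le> phi ^ (2 * i + 5) * norm x"
    using turn_shear_factor_le by (rule mult_right_mono) simp
  finally show ?thesis .
qed

lemma norm_reduce_word_mulv:
  "\<bar>s\<bar> = 1 \<Longrightarrow> norm (reduce_word i s *v x) \<le> phi ^ (i * i + 4 * i + 10) * norm x"
proof (induction i arbitrary: s x)
  case 0
  let ?A = "quarter_turn s ** upper_shear (- s * phi)"
  have step: "norm (?A *v y) \<le> phi ^ 5 * norm y" for y
    using norm_turn_shear_lucas_mulv[OF 0, of 0 y] by simp
  have "norm (reduce_word 0 s *v x) = norm (?A *v (?A *v x))"
    by (simp add: matrix_vector_mul_assoc matrix_mul_assoc)
  also have "\<dots> \<le> phi ^ 5 * (phi ^ 5 * norm x)"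
    using step[of x] phi_gt_1 by (intro order_trans[OF step] mult_left_mono) simp_all
  finally show ?case
    by (simp flip: power_add)
next
  case (Suc i)
  let ?A = "quarter_turn s ** upper_shear (- s * real (fib (2 * i) + fib (2 * i + 2)) * phi)"
  have "\<bar>- s\<bar> = 1"
    using Suc.prems by simp
  have "norm (reduce_word (Suc i) s *v x) = norm (reduce_word i (- s) *v (?A *v x))"
    by (simp add: matrix_vector_mul_assoc matrix_mul_assoc)
  also have "\<dots> \<le> phi ^ (i * i + 4 * i + 10) * (phi ^ (2 * i + 5) * norm x)"
    using norm_turn_shear_lucas_mulv[OF Suc.prems, of i x] phi_gt_1
    by (intro order_trans[OF Suc.IH[OF \<open>\<bar>- s\<bar> = 1\<close>]] mult_left_mono) simp_all
  also have "\<dots> = phi ^ (Suc i * Suc i + 4 * Suc i + 10) * norm x"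
    by (simp add: mult.assoc flip: power_add) (simp add: algebra_simps)
  finally show ?case .
qed

lemma norm_base_point_le: "norm (base_point n) \<le> phi ^ (2 * n + 3)"
proof -
  let ?F = "real (fib (2 * n + 3))"
  have "1 \<le> ?F"
    by (simp add: Suc_leI fib_neq_0_nat)
  then have "norm (base_point n) \<le> 1 + (?F - 1) * phi"
    using norm_vector2_le[of 1 "(1 - ?F) * phi"] phi_gt_1
    by (simp add: base_point_def abs_mult)
  also have "\<dots> \<le> ?F * phi"
    using phi_gt_1 by (simp add: algebra_simps)
  also have "\<dots> \<le> phi ^ (2 * n + 2) * phi"
    using fib_Suc_le_phi_power[of "2 * n + 2"] phi_gt_1
    by (intro mult_right_mono) (simp_all add: numeral_3_eq_3 del: fib.simps)
  also have "\<dots> = phi ^ (2 * n + 3)"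
    by (simp only: power_Suc2[symmetric] add_Suc_right numeral_3_eq_3 numeral_2_eq_2)
  finally show ?thesis .
qed

lemma phi_power_le_powr:
  "phi ^ (n * n + 6 * n + 16) \<le> 16 * phi ^ 17 * (2 / phi ^ (n * n + n)) powr (-4)"
proof -
  have "phi ^ (n * n + 6 * n + 16) \<le> phi ^ (4 * (n * n + n) + 17)"
  proof (rule power_increasing)
    show "n * n + 6 * n + 16 \<le> 4 * (n * n + n) + 17"
      by (simp add: distrib_left) (use le_square[of n] in linarith)
  qed (use phi_gt_1 in simp)
  also have "\<dots> = 16 * phi ^ 17 * ((phi ^ (n * n + n)) ^ 4 / 16)"
    by (simp add: power_add power_mult_distrib flip: power_mult) (simp add: mult.commute)
  also have "\<dots> = 16 * phi ^ 17 * (2 / phi ^ (n * n + n)) powr (-4)"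
    using phi_gt_1 by (simp add: powr_minus powr_realpow power_divide)
  finally show ?thesis .
qed

lemma norm_orbit_triple_point_less:
  assumes "0 \<le> t" "t \<le> 2"
  shows "norm (reduce_word n 1 *v base_point n + t *\<^sub>R axis 1 1)
    < 16 * phi ^ 17 * (2 / phi ^ (n * n + n)) powr (-4)"
proof -
  let ?k = "n * n + 6 * n + 13"
  have "norm (reduce_word n 1 *v base_point n) \<le>
      phi ^ (n * n + 4 * n + 10) * norm (base_point n)"
    by (rule norm_reduce_word_mulv) simp
  also have "\<dots> \<le> phi ^ (n * n + 4 * n + 10) * phi ^ (2 * n + 3)"
    using phi_gt_1 by (intro mult_left_mono norm_base_point_le) simp
  also have "\<dots> = phi ^ ?k"
    by (simp flip: power_add add: algebra_simps)
  finally have "norm (reduce_word n 1 *v base_point n + t *\<^sub>R axis 1 1) \<le> phi ^ ?k + 2"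
    using norm_triangle_ineq[of "reduce_word n 1 *v base_point n" "t *\<^sub>R axis 1 1"] assms by simp
  also have "\<dots> < phi ^ (?k + 3)"
  proof -
    have "phi ^ 3 = 2 * phi + 1"
      unfolding power3_eq_cube using phi_square by algebra
    then have "phi ^ (?k + 3) - phi ^ ?k = 2 * phi * phi ^ ?k"
      by (simp only: power_add) (simp add: algebra_simps)
    moreover have "2 < 2 * phi * phi ^ ?k"
      using phi_gt_1 by (simp add: less_1_mult one_less_power)
    ultimately show ?thesis
      by simp
  qed
  also have "\<dots> \<le> 16 * phi ^ 17 * (2 / phi ^ (n * n + n)) powr (-4)"
    using phi_power_le_powr[of n] by (simp add: add.commute)
  finally show ?thesis .
qed

lemma horizontal_orbit_triple:
  fixes n :: nat
  defines "e \<equiv> 2 / phi ^ (n * n + n)"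
  shows "\<exists>p q r. p \<in> orbitS \<and> q \<in> orbitS \<and> r \<in> orbitS \<and>
    p \<noteq> q \<and> p \<noteq> r \<and> q \<noteq> r \<and>
    (\<exists>a::real^2. {p, q, r} \<subseteq> closed_segment a (a + e *\<^sub>R axis 1 1)) \<and>
    {p, q, r} \<subseteq> ball 0 (16 * phi ^ 17 * e powr (-4))"
proof -
  define p where "p = reduce_word n 1 *v base_point n"
  define d where "d = (phi - 1) / dilation n"
  have e: "e = 2 * phi / dilation n"
    using phi_gt_1 by (simp add: e_def dilation_def)
  have e1: "axis 1 1 = (vector [1, 0] :: real^2)"
    by (simp add: vec_eq_iff forall_2 axis_def)
  have d: "0 < d" "d < e"
    using phi_gt_1 dilation_pos by (simp_all add: d_def e divide_strict_right_mono)
  have "e \<le> 2"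
    using phi_gt_1 by (simp add: e_def divide_le_eq)
  then have "{p, p + d *\<^sub>R axis 1 1, p + e *\<^sub>R axis 1 1} \<subseteq>
      ball 0 (16 * phi ^ 17 * e powr (-4))"
    using d phi_gt_1 norm_orbit_triple_point_less[of 0 n] norm_orbit_triple_point_less[of d n]
      norm_orbit_triple_point_less[of e n]
    by (simp add: p_def e_def)
  moreover have "axis 1 1 \<noteq> (0 :: real^2)"
    by (simp add: axis_eq_0_iff)
  ultimately show ?thesis
    using orbit_triple_in_orbitS[of n] three_points_on_segment[of "axis 1 1" d e p] d
    unfolding p_def d_def e e1 by blast
qed

lemma phi_power_tendsto_zero: "(\<lambda>n. 2 / phi ^ (n * n + n)) \<longlonglongrightarrow> 0"
proof -
  have "(\<lambda>n. inverse phi ^ n) \<longlonglongrightarrow> 0"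
    using phi_gt_1 by (intro LIMSEQ_power_zero) (simp add: inverse_less_1_iff)
  then have "(\<lambda>n. inverse phi ^ (n * n + n)) \<longlonglongrightarrow> 0"
    using LIMSEQ_subseq_LIMSEQ[of _ 0 "\<lambda>n. n * n + n"]
    by (simp add: o_def strict_mono_Suc_iff)
  then show ?thesis
    using tendsto_mult_right_zero[of _ sequentially 2] by (simp add: power_inverse divide_inverse)
qed

theorem theorem1p6:
  shows "\<exists>(\<epsilon>::nat \<Rightarrow> real) (C::real). C > 0 \<and> (\<forall>n. \<epsilon> n > 0) \<and> \<epsilon> \<longlonglongrightarrow> 0 \<and>
    (\<forall>n. \<exists>p q r. p \<in> orbitS \<and> q \<in> orbitS \<and> r \<in> orbitS \<and>
        p \<noteq> q \<and> p \<noteq> r \<and> q \<noteq> r \<and>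
        (\<exists>a::real^2. {p, q, r} \<subseteq> closed_segment a (a + \<epsilon> n *\<^sub>R axis 1 1)) \<and>
        {p, q, r} \<subseteq> ball 0 (C * \<epsilon> n powr (-4)))"
proof (intro exI[of _ "\<lambda>n. 2 / phi ^ (n * n + n)"] exI[of _ "16 * phi ^ 17"] conjI allI)
  show "(16::real) * phi ^ 17 > 0" "2 / phi ^ (n * n + n) > 0" for n
    using phi_gt_1 by simp_all
  show "(\<lambda>n. 2 / phi ^ (n * n + n)) \<longlonglongrightarrow> 0"
    by (rule phi_power_tendsto_zero)
qed (rule horizontal_orbit_triple)

end
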